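(* Let $d\ge1$ be odd, $\mathcal{H}=\mathbb{C}^d$ and $\mathcal{K}=\mathbb{C}^2$. Suppose there exists a quaternion matrix $A\in\mathbb{H}^{d\times d}$ which is Hermitian ($A^\dagger=A$), satisfies $\operatorname{Re}A=0$ (every entry has zero real part), and has eigenvalue $d-1$ with multiplicity $\frac{d+1}2$ and eigenvalue $-(d+1)$ with multiplicity $\frac{d-1}2$. Then there exists a unitary $U\in\mathcal{B}(\mathcal{H}\otimes\mathcal{K})$ with $$\frac1{2d}\operatorname{tr}\big[U\,\overline U^{T_2}\big]=-1+\frac2{d^2}.$$
   Context: Quaternions $q=x_0+x_1i+x_2j+x_3k$ are identified with complex $2\times2$ matrices via $\hat q=\begin{pmatrix}x_0+ix_1&x_2+ix_3\\-x_2+ix_3&x_0-ix_1\end{pmatrix}$; a matrix $A\in\mathbb{H}^{d\times d}$ is identified with the complex $2d\times2d$ matrix $\hat A$ consisting of the $2\times2$ blocks $\hat A_{kl}$, i.e. with an element of $\mathcal{M}_d(\mathbb{C})\otimes\mathcal{M}_2(\mathbb{C})\cong\mathcal{B}(\mathcal{H}\otimes\mathcal{K})$. $A^\dagger$ is the quaternionic conjugate transpose (corresponding to $\hat A^\dagger$), $\operatorname{Re}q=x_0$. The eigenvalues of a quaternion matrix $A$ (right eigenvalues $Ax=x\lambda$) are the complex eigenvalues of $\hat A$ with nonnegative imaginary part; for Hermitian $A$ they are real, and an eigenvalue of $A$ of multiplicity $m$ is an eigenvalue of $\hat A$ of multiplicity $2m$. The partial transpose $T_2$ acts on the $\mathcal{K}$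 factor in the product basis, $(X\otimes Y)^{T_2}=X\otimes Y^T$, and $\overline U$ is the entrywise complex conjugate. *)

theory Defs
  imports Complex_Main "Jordan_Normal_Form.Char_Poly"
begin

datatype quat = Quat (qx0: real) (qx1: real) (qx2: real) (qx3: real)

definition qRe :: "quat \<Rightarrow> real" where "qRe q = qx0 q"
definition qconj :: "quat \<Rightarrow> quat" where
  "qconj q = Quat (qx0 q) (- qx1 q) (- qx2 q) (- qx3 q)"

definition qhat :: "quat \<Rightarrow> nat \<Rightarrow> nat \<Rightarrow> complex" where
  "qhat q a b =
     (if a = 0 \<and> b = 0 then Complex (qx0 q) (qx1 q)
      else if a = 0 \<and> b = 1 then Complex (qx2 q) (qx3 q)
      else if a = 1 \<and> b = 0 then Complex (- qx2 q) (qx3 q)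
      else Complex (qx0 q) (- qx1 q))"

text \<open>A d x d quaternion matrix is a function on indices k,l < d.
  Its complex representation is the 2d x 2d matrix made of the 2x2 blocks qhat (A k l);
  index (k,a) of H \<otimes> K corresponds to 2k+a.\<close>
definition qmat_hat :: "nat \<Rightarrow> (nat \<Rightarrow> nat \<Rightarrow> quat) \<Rightarrow> complex mat" where
  "qmat_hat d A = mat (2*d) (2*d) (\<lambda>(i,j). qhat (A (i div 2) (j div 2)) (i mod 2) (j mod 2))"

definition qhermitian :: "nat \<Rightarrow> (nat \<Rightarrow> nat \<Rightarrow> quat) \<Rightarrow> bool" where
  "qhermitian d A \<longleftrightarrow> (\<forall>k<d. \<forall>l<d. A k l = qconj (A l k))"

definition cadj :: "complex mat \<Rightarrow> complex mat" where
  "cadj U = mat (dim_col U) (dim_row U) (\<lambda>(i,j). cnj (U $$ (j,i)))"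

definition cconj_mat :: "complex mat \<Rightarrow> complex mat" where
  "cconj_mat U = mat (dim_row U) (dim_col U) (\<lambda>(i,j). cnj (U $$ (i,j)))"

definition unitary_mat :: "nat \<Rightarrow> complex mat \<Rightarrow> bool" where
  "unitary_mat n U \<longleftrightarrow> U \<in> carrier_mat n n \<and> U * cadj U = 1\<^sub>m n \<and> cadj U * U = 1\<^sub>m n"

text \<open>Partial transpose on the second factor K = C^2 of H \<otimes> K, index (k,a) = 2k+a:
  X^T2((k,a),(l,b)) = X((k,b),(l,a)).\<close>
definition ptrans2 :: "complex mat \<Rightarrow> complex mat" where
  "ptrans2 X = mat (dim_row X) (dim_col X)
     (\<lambda>(i,j). X $$ (2*(i div 2) + j mod 2, 2*(j div 2) + i mod 2))"

definition mtrace :: "complex mat \<Rightarrow> complex" where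
  "mtrace X = (\<Sum>i<dim_row X. X $$ (i,i))"

end

theory Submission
  imports Defs "Jordan_Normal_Form.Schur_Decomposition" "Jordan_Normal_Form.Jordan_Normal_Form_Uniqueness"
begin

text \<open>Write \<open>H\<close> for the complex matrix of \<open>A\<close> and \<open>c = d\<close>. \<open>H\<close> is Hermitian with spectrum in
  \<open>{c - 1, -(c + 1)}\<close>; triangularising \<open>H\<close> shows that the Hermitian matrix
  \<open>N = (H - (c - 1))(H + (c + 1))\<close> has \<open>tr N\<^sup>2 = 0\<close>, so \<open>N = 0\<close>, i.e. \<open>H\<^sup>2 = (c\<^sup>2 - 1) - 2H\<close>.
  Hence \<open>U = (H + 1)/c\<close> is Hermitian with \<open>U\<^sup>2 = 1\<close>, so unitary. As the entries of \<open>A\<close> are pure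
  quaternions, entrywise conjugation followed by the partial transpose sends \<open>H\<close> to \<open>-H\<close> and
  hence \<open>U\<close> to \<open>(1 - H)/c\<close>; thus \<open>U conj(U)\<^sup>T\<^sup>2 = (1 - H\<^sup>2)/c\<^sup>2 = (2H + 2 - c\<^sup>2)/c\<^sup>2\<close>, whose
  trace is \<open>2d (2 - c\<^sup>2)/c\<^sup>2\<close> because \<open>tr H = 2 \<Sum> Re A\<^sub>k\<^sub>k = 0\<close>.\<close>

section \<open>Traces and triangular matrices\<close>

lemma index_mult_mat_sum:
  assumes "A \<in> carrier_mat n n" "B \<in> carrier_mat n n" "i < n" "j < n"
  shows "(A * B) $$ (i,j) = (\<Sum>k<n. A $$ (i,k) * B $$ (k,j))"
  using assms by (simp add: scalar_prod_def atLeast0LessThan)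

lemma smult_mult_smult_mat:
  assumes "X \<in> carrier_mat n n" "Y \<in> carrier_mat n n"
  shows "(a \<cdot>\<^sub>m X) * (b \<cdot>\<^sub>m Y) = (a * b :: 'a :: comm_ring) \<cdot>\<^sub>m (X * Y)"
  using assms by (intro eq_matI) (auto simp: index_mult_mat_sum sum_distrib_left algebra_simps)

lemma mtrace_mult_commute:
  assumes "A \<in> carrier_mat n n" "B \<in> carrier_mat n n"
  shows "mtrace (A * B) = mtrace (B * A)"
proof -
  have "mtrace (A * B) = (\<Sum>i<n. \<Sum>k<n. A $$ (i,k) * B $$ (k,i))"
    unfolding mtrace_def using assms by (intro sum.cong refl index_mult_mat_sum) auto
  also have "\<dots> = (\<Sum>k<n. \<Sum>i<n. B $$ (k,i) * A $$ (i,k))"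
    by (subst sum.swap) (simp add: mult.commute)
  also have "\<dots> = mtrace (B * A)"
    unfolding mtrace_def using assms by (intro sum.cong refl index_mult_mat_sum[symmetric]) auto
  finally show ?thesis .
qed

lemma mtrace_similar_mat_wit:
  assumes "similar_mat_wit A B P Q"
  shows "mtrace A = mtrace B"
proof -
  define n where "n = dim_row A"
  from similar_mat_witD[OF n_def assms] have
    P: "P \<in> carrier_mat n n" and Q: "Q \<in> carrier_mat n n" and B: "B \<in> carrier_mat n n"
    and QP: "Q * P = 1\<^sub>m n" and AB: "A = P * B * Q" by auto
  have "mtrace A = mtrace (P * (B * Q))" using P B Q by (simp add: AB assoc_mult_mat)
  also have "\<dots> = mtrace (B * Q * P)" using P B Q mtrace_mult_commute[of P n "B * Q"] by simp
  also have "B * Q * P = B" using P B Q QP by (simp add: assoc_mult_mat)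
  finally show ?thesis .
qed

lemma similar_mat_wit_mult:
  assumes AB: "similar_mat_wit A B P Q" and AB': "similar_mat_wit A' B' P Q"
  shows "similar_mat_wit (A * A') (B * B') P Q"
proof -
  define n where "n = dim_row A"
  note wit = similar_mat_witD[OF n_def AB]
  have "n = dim_row A'"
    using carrier_matD(1)[OF wit(6)] carrier_matD(1)[OF similar_mat_witD(6)[OF refl AB']]
    by (rule trans[OF sym])
  note wit' = similar_mat_witD[OF this AB']
  have "A * A' = P * B * Q * (P * B' * Q)" by (simp only: wit(3) wit'(3))
  also have "\<dots> = P * (B * (Q * P) * B') * Q"
    using wit(5-7) wit'(5) by (simp add: assoc_mult_mat[of _ n n _ n _ n])
  also have "\<dots> = P * (B * B') * Q" using wit(2,5) by simp
  finally show ?thesis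
    by (rule similar_mat_witI[OF wit(1,2) _ mult_carrier_mat[OF wit(4) wit'(4)]
          mult_carrier_mat[OF wit(5) wit'(5)] wit(6,7)])
qed

lemma upper_triangular_mult_index:
  assumes X: "X \<in> carrier_mat n n" and Y: "Y \<in> carrier_mat n n"
    and "upper_triangular X" "upper_triangular Y" and ij: "j \<le> i" "i < n"
  shows "(X * Y) $$ (i,j) = (if i = j then X $$ (i,i) * Y $$ (i,i) else 0)"
proof -
  have "(X * Y) $$ (i,j) = (\<Sum>k<n. X $$ (i,k) * Y $$ (k,j))"
    using ij by (intro index_mult_mat_sum[OF X Y]) auto
  also have "\<dots> = (\<Sum>k<n. if k = i \<and> i = j then X $$ (i,i) * Y $$ (i,i) else 0)"
  proof (rule sum.cong[OF refl])
    fix k assume "k \<in> {..<n}"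
    show "X $$ (i,k) * Y $$ (k,j) = (if k = i \<and> i = j then X $$ (i,i) * Y $$ (i,i) else 0)"
    proof (cases "k = i \<and> i = j")
      case False
      with ij have "k < i \<or> j < k" by linarith
      with assms \<open>k \<in> {..<n}\<close> False show ?thesis by (auto simp: upper_triangular_def)
    qed simp
  qed
  also have "\<dots> = (if i = j then X $$ (i,i) * Y $$ (i,i) else 0)"
    using ij by (auto simp: sum.delta)
  finally show ?thesis .
qed

lemma char_matrix_mult:
  assumes M: "M \<in> carrier_mat n n"
  shows "char_matrix M a * char_matrix M b = M * M + (- (a + b)) \<cdot>\<^sub>m M + (a * b) \<cdot>\<^sub>m 1\<^sub>m n"
proof (rule eq_matI)
  fix i j assume "i < dim_row (M * M + (- (a + b)) \<cdot>\<^sub>m M + (a * b) \<cdot>\<^sub>m 1\<^sub>m n)"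
    "j < dim_col (M * M + (- (a + b)) \<cdot>\<^sub>m M + (a * b) \<cdot>\<^sub>m 1\<^sub>m n)"
  with M have i: "i < n" and j: "j < n" by auto
  let ?\<delta> = "\<lambda>k l. if k = l then 1 else 0"
  have "(char_matrix M a * char_matrix M b) $$ (i,j)
      = (\<Sum>k<n. (M $$ (i,k) - a * ?\<delta> i k) * (M $$ (k,j) - b * ?\<delta> k j))"
    using M i j by (subst index_mult_mat_sum[of _ n]) (auto simp: char_matrix_def intro!: sum.cong)
  also have "\<dots> = (\<Sum>k<n. M $$ (i,k) * M $$ (k,j) - b * (if k = j then M $$ (i,k) else 0)
      - a * (if i = k then M $$ (k,j) else 0) + a * b * (if i = k then ?\<delta> k j else 0))"
    by (rule sum.cong) (auto simp: algebra_simps)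
  also have "\<dots> = (\<Sum>k<n. M $$ (i,k) * M $$ (k,j)) - b * (\<Sum>k<n. if k = j then M $$ (i,k) else 0)
      - a * (\<Sum>k<n. if i = k then M $$ (k,j) else 0) + a * b * (\<Sum>k<n. if i = k then ?\<delta> k j else 0)"
    by (simp only: sum.distrib sum_subtractf sum_distrib_left)
  also have "\<dots> = (M * M + (- (a + b)) \<cdot>\<^sub>m M + (a * b) \<cdot>\<^sub>m 1\<^sub>m n) $$ (i,j)"
    using M i j index_mult_mat_sum[OF M M i j] by (simp add: sum.delta sum.delta' algebra_simps)
  finally show "(char_matrix M a * char_matrix M b) $$ (i,j)
      = (M * M + (- (a + b)) \<cdot>\<^sub>m M + (a * b) \<cdot>\<^sub>m 1\<^sub>m n) $$ (i,j)" .
qed (use M in \<open>auto simp: char_matrix_def\<close>)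

lemma mtrace_square_char_matrix_mult_eq_0:
  fixes M :: "complex mat"
  assumes M: "M \<in> carrier_mat n n" and cp: "char_poly M = [:- a, 1:] ^ p * [:- b, 1:] ^ q"
  defines "N \<equiv> char_matrix M a * char_matrix M b"
  shows "mtrace (N * N) = 0"
proof -
  \<comment> \<open>Schur: \<open>N\<close> is similar to a product \<open>C\<close> of two upper triangular matrices whose diagonal
    entries multiply to zero, so \<open>C\<close> is strictly upper triangular.\<close>
  define es where "es = replicate p a @ replicate q b"
  have cp_es: "char_poly M = (\<Prod>e\<leftarrow>es. [:- e, 1:])"
    using cp by (simp add: es_def map_replicate prod_list_replicate)
  obtain B P Q where "schur_decomposition M es = (B, P, Q)"
    by (cases "schur_decomposition M es") auto
  from schur_decomposition[OF M cp_es this] have sim: "similar_mat_wit M B P Q"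
    and "upper_triangular B" and diag: "diag_mat B = es" by auto
  have B: "B \<in> carrier_mat n n" using similar_mat_witD2[OF M sim] by simp
  define C where "C = char_matrix B a * char_matrix B b"
  have C: "C \<in> carrier_mat n n"
    unfolding C_def using B by (intro mult_carrier_mat[of _ n n] char_matrix_closed)
  have ut: "upper_triangular (char_matrix B e)" for e
    using B \<open>upper_triangular B\<close> by (auto simp: char_matrix_def upper_triangular_def)
  have C_lower: "C $$ (i,j) = 0" if "j \<le> i" "i < n" for i j
  proof -
    have Cij: "C $$ (i,j) = (if i = j then char_matrix B a $$ (i,i) * char_matrix B b $$ (i,i) else 0)"
      unfolding C_def
      by (rule upper_triangular_mult_index[OF char_matrix_closed[OF B] char_matrix_closed[OF B] ut ut that])
    have "B $$ (i,i) \<in> set es" using diag B that by (auto simp: diag_mat_def)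
    then have "(B $$ (i,i) - a) * (B $$ (i,i) - b) = 0" by (auto simp: es_def)
    moreover have "char_matrix B e $$ (i,i) = B $$ (i,i) - e" for e
      using B that by (simp add: char_matrix_def)
    ultimately have "char_matrix B a $$ (i,i) * char_matrix B b $$ (i,i) = 0" by simp
    with Cij show ?thesis by (cases "i = j") simp_all
  qed
  then have ut_C: "upper_triangular C" using C by (auto simp: upper_triangular_def)
  have "(C * C) $$ (i,i) = 0" if "i < n" for i
    using upper_triangular_mult_index[OF C C ut_C ut_C order_refl that] C_lower[OF order_refl that]
    by simp
  then have "mtrace (C * C) = 0" using C by (simp add: mtrace_def)
  moreover have "similar_mat_wit N C P Q"
    unfolding N_def C_def by (intro similar_mat_wit_mult similar_mat_wit_char_matrix sim)
  ultimately show ?thesis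
    using mtrace_similar_mat_wit[OF similar_mat_wit_mult] by metis
qed

section \<open>Hermitian matrices with two eigenvalues\<close>

definition hermitian_mat :: "nat \<Rightarrow> complex mat \<Rightarrow> bool" where
  "hermitian_mat n M \<longleftrightarrow> M \<in> carrier_mat n n \<and> cadj M = M"

lemma hermitian_mat_iff:
  "hermitian_mat n M \<longleftrightarrow> M \<in> carrier_mat n n \<and> (\<forall>i<n. \<forall>j<n. cnj (M $$ (i,j)) = M $$ (j,i))"
proof -
  have "cadj M = M \<longleftrightarrow> (\<forall>i<n. \<forall>j<n. cnj (M $$ (i,j)) = M $$ (j,i))" if M: "M \<in> carrier_mat n n"
  proof
    assume "cadj M = M"
    then show "\<forall>i<n. \<forall>j<n. cnj (M $$ (i,j)) = M $$ (j,i)"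
      using M by (metis cadj_def carrier_matD index_mat(1) old.prod.case)
  next
    assume "\<forall>i<n. \<forall>j<n. cnj (M $$ (i,j)) = M $$ (j,i)"
    then show "cadj M = M" using M by (intro eq_matI) (auto simp: cadj_def)
  qed
  then show ?thesis unfolding hermitian_mat_def by blast
qed

lemma hermitian_mat_carrier: "hermitian_mat n M \<Longrightarrow> M \<in> carrier_mat n n"
  by (simp add: hermitian_mat_def)

lemma hermitian_matD: "hermitian_mat n M \<Longrightarrow> i < n \<Longrightarrow> j < n \<Longrightarrow> cnj (M $$ (i,j)) = M $$ (j,i)"
  by (simp add: hermitian_mat_iff)

lemma hermitian_mat_smult: "hermitian_mat n M \<Longrightarrow> cnj c = c \<Longrightarrow> hermitian_mat n (c \<cdot>\<^sub>m M)"
  by (auto simp: hermitian_mat_iff)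

lemma hermitian_mat_char_matrix: "hermitian_mat n M \<Longrightarrow> cnj e = e \<Longrightarrow> hermitian_mat n (char_matrix M e)"
  by (auto simp: hermitian_mat_iff char_matrix_def)

lemma hermitian_mat_mult_commute:
  assumes X: "hermitian_mat n X" and Y: "hermitian_mat n Y" and XY: "X * Y = Y * X"
  shows "hermitian_mat n (X * Y)"
proof -
  have XC: "X \<in> carrier_mat n n" and YC: "Y \<in> carrier_mat n n"
    using X Y by (simp_all add: hermitian_mat_carrier)
  have "cnj ((X * Y) $$ (i,j)) = (X * Y) $$ (j,i)" if ij: "i < n" "j < n" for i j
  proof -
    have "cnj ((X * Y) $$ (i,j)) = (\<Sum>k<n. cnj (X $$ (i,k)) * cnj (Y $$ (k,j)))"
      by (simp add: index_mult_mat_sum[OF XC YC ij])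
    also have "\<dots> = (\<Sum>k<n. Y $$ (j,k) * X $$ (k,i))"
      using ij by (intro sum.cong refl) (simp add: hermitian_matD[OF X] hermitian_matD[OF Y])
    also have "\<dots> = (X * Y) $$ (j,i)"
      by (simp only: XY index_mult_mat_sum[OF YC XC ij(2,1)])
    finally show ?thesis .
  qed
  with mult_carrier_mat[OF XC YC] show ?thesis by (auto simp: hermitian_mat_iff)
qed

lemma hermitian_mat_eq_0_if_mtrace_square:
  assumes N: "hermitian_mat n N" and tr: "mtrace (N * N) = 0"
  shows "N = 0\<^sub>m n n"
proof -
  have N_carrier: "N \<in> carrier_mat n n" using N by (rule hermitian_mat_carrier)
  have "mtrace (N * N) = (\<Sum>i<n. \<Sum>k<n. N $$ (i,k) * N $$ (k,i))"
    unfolding mtrace_def using N_carrier by (intro sum.cong refl index_mult_mat_sum) auto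
  also have "\<dots> = of_real (\<Sum>i<n. \<Sum>k<n. (cmod (N $$ (i,k)))\<^sup>2)"
    using hermitian_matD[OF N]
    by (auto simp: complex_norm_square simp del: of_real_power intro!: sum.cong)
  finally have "(\<Sum>i<n. \<Sum>k<n. (cmod (N $$ (i,k)))\<^sup>2) = 0"
    using tr by (metis of_real_eq_0_iff)
  then have "(cmod (N $$ (i,k)))\<^sup>2 = 0" if "i < n" "k < n" for i k
    using that by (simp add: sum_nonneg_eq_0_iff sum_nonneg)
  then show ?thesis using N_carrier by (intro eq_matI) auto
qed

lemma hermitian_mat_quadratic_relation:
  assumes M: "hermitian_mat n M" and cp: "char_poly M = [:- a, 1:] ^ p * [:- b, 1:] ^ q"
    and "cnj a = a" "cnj b = b"
  shows "M * M = (a + b) \<cdot>\<^sub>m M + (- (a * b)) \<cdot>\<^sub>m 1\<^sub>m n"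
proof -
  have M_carrier: "M \<in> carrier_mat n n" using M by (rule hermitian_mat_carrier)
  let ?N = "char_matrix M a * char_matrix M b"
  have "hermitian_mat n ?N"
    using assms M_carrier
    by (intro hermitian_mat_mult_commute hermitian_mat_char_matrix)
       (simp_all add: char_matrix_mult add.commute mult.commute)
  then have "?N = 0\<^sub>m n n"
    using mtrace_square_char_matrix_mult_eq_0[OF M_carrier cp]
    by (rule hermitian_mat_eq_0_if_mtrace_square)
  then have "(M * M + (- (a + b)) \<cdot>\<^sub>m M + (a * b) \<cdot>\<^sub>m 1\<^sub>m n) $$ (i,j) = 0" if "i < n" "j < n" for i j
    using that by (simp add: char_matrix_mult[OF M_carrier])
  then show ?thesis
    using M_carrier by (intro eq_matI) (auto simp: algebra_simps)
qed

lemma hermitian_mat_square_eq_of_char_poly: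
  assumes H: "hermitian_mat n H" and cp: "char_poly H = [:- (c - 1), 1:] ^ p * [:c + 1, 1:] ^ q"
    and "cnj c = c"
  shows "H * H = (- 2) \<cdot>\<^sub>m H + (c * c - 1) \<cdot>\<^sub>m 1\<^sub>m n"
proof -
  have "char_poly H = [:- (c - 1), 1:] ^ p * [:- (- (c + 1)), 1:] ^ q"
    using cp by (simp only: minus_minus)
  moreover have "cnj (c - 1) = c - 1" "cnj (- (c + 1)) = - (c + 1)" using \<open>cnj c = c\<close> by simp_all
  ultimately have "H * H = (c - 1 + - (c + 1)) \<cdot>\<^sub>m H + (- ((c - 1) * - (c + 1))) \<cdot>\<^sub>m 1\<^sub>m n"
    by (rule hermitian_mat_quadratic_relation[OF H])
  moreover have "c - 1 + - (c + 1) = - 2" "- ((c - 1) * - (c + 1)) = c * c - 1"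
    by (simp_all add: algebra_simps)
  ultimately show ?thesis by (simp only:)
qed

section \<open>Quaternion matrices and the partial transpose\<close>

lemma sum_lessThan_double:
  "(\<Sum>i<2 * d. f i) = (\<Sum>k<(d::nat). f (2 * k) + f (2 * k + 1) :: 'a :: comm_monoid_add)"
  by (induction d) (simp_all add: add.assoc)

lemma qhat_qconj: "a < 2 \<Longrightarrow> b < 2 \<Longrightarrow> cnj (qhat q b a) = qhat (qconj q) a b"
  by (cases "a = 0"; cases "b = 0") (auto simp: qhat_def qconj_def complex_eq_iff)

lemma qhat_qconj_pure: "qRe q = 0 \<Longrightarrow> a < 2 \<Longrightarrow> b < 2 \<Longrightarrow> qhat (qconj q) a b = - qhat q a b"
  by (cases "a = 0"; cases "b = 0") (auto simp: qRe_def qhat_def qconj_def complex_eq_iff)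

lemma qmat_hat_carrier: "qmat_hat d A \<in> carrier_mat (2 * d) (2 * d)"
  by (simp add: qmat_hat_def)

lemma dim_qmat_hat [simp]: "dim_row (qmat_hat d A) = 2 * d" "dim_col (qmat_hat d A) = 2 * d"
  by (simp_all add: qmat_hat_def)

lemma index_qmat_hat:
  "i < 2 * d \<Longrightarrow> j < 2 * d \<Longrightarrow> qmat_hat d A $$ (i,j) = qhat (A (i div 2) (j div 2)) (i mod 2) (j mod 2)"
  by (simp add: qmat_hat_def)

lemma hermitian_mat_qmat_hat:
  assumes "qhermitian d A"
  shows "hermitian_mat (2 * d) (qmat_hat d A)"
  unfolding hermitian_mat_iff
proof (intro conjI allI impI qmat_hat_carrier)
  fix i j assume ij: "i < 2 * d" "j < 2 * d"
  then have "i div 2 < d" "j div 2 < d" by simp_all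
  then have "A (j div 2) (i div 2) = qconj (A (i div 2) (j div 2))"
    using assms unfolding qhermitian_def by blast
  then show "cnj (qmat_hat d A $$ (i,j)) = qmat_hat d A $$ (j,i)"
    using ij by (simp add: index_qmat_hat qhat_qconj)
qed

lemma mtrace_qmat_hat: "mtrace (qmat_hat d A) = 2 * (\<Sum>k<d. complex_of_real (qRe (A k k)))"
proof -
  have "mtrace (qmat_hat d A) = (\<Sum>k<d. qmat_hat d A $$ (2 * k, 2 * k) + qmat_hat d A $$ (2 * k + 1, 2 * k + 1))"
    by (simp only: mtrace_def dim_qmat_hat sum_lessThan_double)
  also have "\<dots> = (\<Sum>k<d. 2 * complex_of_real (qRe (A k k)))"
    by (intro sum.cong refl) (simp add: index_qmat_hat qhat_def qRe_def complex_eq_iff)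
  finally show ?thesis by (simp add: sum_distrib_left)
qed

lemma dim_cconj_mat [simp]: "dim_row (cconj_mat X) = dim_row X" "dim_col (cconj_mat X) = dim_col X"
  by (simp_all add: cconj_mat_def)

lemma dim_ptrans2 [simp]: "dim_row (ptrans2 X) = dim_row X" "dim_col (ptrans2 X) = dim_col X"
  by (simp_all add: ptrans2_def)

lemma partial_swap_index:
  fixes i j d :: nat
  assumes "i < 2 * d" "j < 2 * d"
  shows "2 * (i div 2) + j mod 2 < 2 * d"
    and "(2 * (i div 2) + j mod 2) div 2 = i div 2"
    and "(2 * (i div 2) + j mod 2) mod 2 = j mod 2"
    and "2 * (i div 2) + j mod 2 = 2 * (j div 2) + i mod 2 \<longleftrightarrow> i = j"
proof -
  have "i div 2 < d" using assms by simp
  then show "2 * (i div 2) + j mod 2 < 2 * d" by linarith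
  show "(2 * (i div 2) + j mod 2) div 2 = i div 2" "(2 * (i div 2) + j mod 2) mod 2 = j mod 2"
    by simp_all
  show "2 * (i div 2) + j mod 2 = 2 * (j div 2) + i mod 2 \<longleftrightarrow> i = j"
  proof
    assume eq: "2 * (i div 2) + j mod 2 = 2 * (j div 2) + i mod 2"
    then have "(2 * (i div 2) + j mod 2) mod 2 = (2 * (j div 2) + i mod 2) mod 2" by simp
    then have "j mod 2 = i mod 2" by simp
    moreover from eq this have "i div 2 = j div 2" by simp
    ultimately show "i = j" by (metis div_mult_mod_eq)
  qed simp
qed

lemma index_ptrans2_cconj_mat:
  assumes "Y \<in> carrier_mat (2 * d) (2 * d)" "i < 2 * d" "j < 2 * d"
  shows "ptrans2 (cconj_mat Y) $$ (i,j) = cnj (Y $$ (2 * (i div 2) + j mod 2, 2 * (j div 2) + i mod 2))"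
  using assms partial_swap_index(1)[OF assms(2,3)] partial_swap_index(1)[OF assms(3,2)]
  by (simp add: ptrans2_def cconj_mat_def)

lemma ptrans2_cconj_mat_qmat_hat:
  "ptrans2 (cconj_mat (qmat_hat d A)) = qmat_hat d (\<lambda>k l. qconj (A k l))"
proof (rule eq_matI)
  fix i j assume "i < dim_row (qmat_hat d (\<lambda>k l. qconj (A k l)))"
    "j < dim_col (qmat_hat d (\<lambda>k l. qconj (A k l)))"
  then have ij: "i < 2 * d" "j < 2 * d" by simp_all
  define p q where "p = 2 * (i div 2) + j mod 2" and "q = 2 * (j div 2) + i mod 2"
  have p: "p < 2 * d" "p div 2 = i div 2" "p mod 2 = j mod 2"
    unfolding p_def using partial_swap_index(1-3)[OF ij] by blast+
  have q: "q < 2 * d" "q div 2 = j div 2" "q mod 2 = i mod 2"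
    unfolding q_def using partial_swap_index(1-3)[OF ij(2,1)] by blast+
  have "ptrans2 (cconj_mat (qmat_hat d A)) $$ (i,j) = cnj (qmat_hat d A $$ (p,q))"
    unfolding p_def q_def by (rule index_ptrans2_cconj_mat[OF qmat_hat_carrier ij])
  also have "\<dots> = cnj (qhat (A (i div 2) (j div 2)) (j mod 2) (i mod 2))"
    using p q by (simp add: index_qmat_hat)
  also have "\<dots> = qmat_hat d (\<lambda>k l. qconj (A k l)) $$ (i,j)"
    using ij by (simp add: index_qmat_hat qhat_qconj)
  finally show "ptrans2 (cconj_mat (qmat_hat d A)) $$ (i,j) = qmat_hat d (\<lambda>k l. qconj (A k l)) $$ (i,j)" .
qed simp_all

lemma qmat_hat_qconj_pure:
  assumes "\<forall>k<d. \<forall>l<d. qRe (A k l) = 0"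
  shows "qmat_hat d (\<lambda>k l. qconj (A k l)) = - qmat_hat d A"
proof (rule eq_matI)
  fix i j assume "i < dim_row (- qmat_hat d A)" "j < dim_col (- qmat_hat d A)"
  then have ij: "i < 2 * d" "j < 2 * d" by simp_all
  then have "qRe (A (i div 2) (j div 2)) = 0" using assms by simp
  then show "qmat_hat d (\<lambda>k l. qconj (A k l)) $$ (i,j) = (- qmat_hat d A) $$ (i,j)"
    using ij by (simp add: index_qmat_hat qhat_qconj_pure)
qed simp_all

lemma ptrans2_cconj_mat_smult_char_matrix:
  assumes X: "X \<in> carrier_mat (2 * d) (2 * d)"
  shows "ptrans2 (cconj_mat (c \<cdot>\<^sub>m char_matrix X e))
    = cnj c \<cdot>\<^sub>m char_matrix (ptrans2 (cconj_mat X)) (cnj e)"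
proof (rule eq_matI)
  fix i j assume "i < dim_row (cnj c \<cdot>\<^sub>m char_matrix (ptrans2 (cconj_mat X)) (cnj e))"
    "j < dim_col (cnj c \<cdot>\<^sub>m char_matrix (ptrans2 (cconj_mat X)) (cnj e))"
  then have ij: "i < 2 * d" "j < 2 * d"
    using X by (simp_all add: ptrans2_def cconj_mat_def char_matrix_def)
  define p q where "p = 2 * (i div 2) + j mod 2" and "q = 2 * (j div 2) + i mod 2"
  have pq: "p < 2 * d" "q < 2 * d" "p = q \<longleftrightarrow> i = j"
    unfolding p_def q_def using partial_swap_index(1,4)[OF ij] partial_swap_index(1)[OF ij(2,1)]
    by blast+
  have "ptrans2 (cconj_mat (c \<cdot>\<^sub>m char_matrix X e)) $$ (i,j) = cnj ((c \<cdot>\<^sub>m char_matrix X e) $$ (p,q))"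
    unfolding p_def q_def using X ij by (intro index_ptrans2_cconj_mat) simp_all
  also have "\<dots> = cnj c * (cnj (X $$ (p,q)) - cnj e * (if i = j then 1 else 0))"
    using X pq by (simp add: char_matrix_def)
  also have "cnj (X $$ (p,q)) = ptrans2 (cconj_mat X) $$ (i,j)"
    unfolding p_def q_def index_ptrans2_cconj_mat[OF X ij] ..
  also have "cnj c * (ptrans2 (cconj_mat X) $$ (i,j) - cnj e * (if i = j then 1 else 0))
      = (cnj c \<cdot>\<^sub>m char_matrix (ptrans2 (cconj_mat X)) (cnj e)) $$ (i,j)"
    using X ij by (simp add: char_matrix_def)
  finally show "ptrans2 (cconj_mat (c \<cdot>\<^sub>m char_matrix X e)) $$ (i,j)
    = (cnj c \<cdot>\<^sub>m char_matrix (ptrans2 (cconj_mat X)) (cnj e)) $$ (i,j)" .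
qed (use X in \<open>simp_all add: char_matrix_def\<close>)

lemma ptrans2_cconj_mat_shift:
  assumes H: "H \<in> carrier_mat (2 * d) (2 * d)" and "ptrans2 (cconj_mat H) = - H" and "cnj c = c"
  shows "ptrans2 (cconj_mat ((1 / c) \<cdot>\<^sub>m char_matrix H (- 1))) = (- 1 / c) \<cdot>\<^sub>m char_matrix H 1"
proof -
  have "ptrans2 (cconj_mat ((1 / c) \<cdot>\<^sub>m char_matrix H (- 1))) = (1 / c) \<cdot>\<^sub>m char_matrix (- H) (- 1)"
    using assms by (simp add: ptrans2_cconj_mat_smult_char_matrix)
  also have "\<dots> = (- 1 / c) \<cdot>\<^sub>m char_matrix H 1"
    using H by (intro eq_matI) (simp_all add: char_matrix_def diff_divide_distrib)
  finally show ?thesis .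
qed

lemma unitary_mat_shift_of_quadratic_relation:
  assumes H: "hermitian_mat n H" and quad: "H * H = (- 2) \<cdot>\<^sub>m H + (c * c - 1) \<cdot>\<^sub>m 1\<^sub>m n"
    and c: "c \<noteq> 0" "cnj c = c"
  shows "unitary_mat n ((1 / c) \<cdot>\<^sub>m char_matrix H (- 1))"
proof -
  let ?U = "(1 / c) \<cdot>\<^sub>m char_matrix H (- 1)"
  have H_carrier: "H \<in> carrier_mat n n" using H by (rule hermitian_mat_carrier)
  have "hermitian_mat n ?U"
    using H c by (simp add: hermitian_mat_smult hermitian_mat_char_matrix)
  moreover have "?U * ?U = 1\<^sub>m n"
  proof -
    have "?U * ?U = (1 / c * (1 / c)) \<cdot>\<^sub>m (char_matrix H (- 1) * char_matrix H (- 1))"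
    using H_carrier by (intro smult_mult_smult_mat[of _ n]) simp_all
    also have "\<dots> = 1\<^sub>m n"
      using H_carrier c by (intro eq_matI) (simp_all add: char_matrix_mult quad field_simps)
    finally show ?thesis .
  qed
  ultimately show ?thesis by (simp add: unitary_mat_def hermitian_mat_def)
qed

lemma mtrace_shift_product_of_quadratic_relation:
  assumes H: "H \<in> carrier_mat n n" and quad: "H * H = (- 2) \<cdot>\<^sub>m H + (c * c - 1) \<cdot>\<^sub>m 1\<^sub>m n"
    and tr: "mtrace H = 0" and c: "c \<noteq> 0"
  shows "mtrace (((1 / c) \<cdot>\<^sub>m char_matrix H (- 1)) * ((- 1 / c) \<cdot>\<^sub>m char_matrix H 1))
    = of_nat n * (2 - c * c) / (c * c)"
proof -
  have "((1 / c) \<cdot>\<^sub>m char_matrix H (- 1)) * ((- 1 / c) \<cdot>\<^sub>m char_matrix H 1)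
      = (1 / c * (- 1 / c)) \<cdot>\<^sub>m (char_matrix H (- 1) * char_matrix H 1)"
    using H by (intro smult_mult_smult_mat[of _ n]) simp_all
  also have "\<dots> = (2 / (c * c)) \<cdot>\<^sub>m H + ((2 - c * c) / (c * c)) \<cdot>\<^sub>m 1\<^sub>m n"
    using H c by (intro eq_matI) (simp_all add: char_matrix_mult quad field_simps)
  finally have "mtrace (((1 / c) \<cdot>\<^sub>m char_matrix H (- 1)) * ((- 1 / c) \<cdot>\<^sub>m char_matrix H 1))
      = (\<Sum>i<n. 2 / (c * c) * H $$ (i,i) + (2 - c * c) / (c * c))"
    using H by (simp add: mtrace_def)
  also have "\<dots> = 2 / (c * c) * mtrace H + of_nat n * (2 - c * c) / (c * c)"
    using H by (simp add: mtrace_def sum.distrib sum_distrib_left)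
  finally show ?thesis using tr by simp
qed

theorem proposition10:
  fixes d :: nat and A :: "nat \<Rightarrow> nat \<Rightarrow> quat"
  assumes "d \<ge> 1" and "odd d"
    and "qhermitian d A"
    and "\<forall>k<d. \<forall>l<d. qRe (A k l) = 0"
    and "char_poly (qmat_hat d A) =
           [:- (of_nat d - 1), 1:] ^ (2 * ((d + 1) div 2)) *
           [:of_nat d + 1, 1:] ^ (2 * ((d - 1) div 2))"
  shows "\<exists>U. unitary_mat (2*d) U \<and>
           mtrace (U * ptrans2 (cconj_mat U)) / (2 * of_nat d) = - 1 + 2 / (of_nat d)^2"
proof -
  define H where "H = qmat_hat d A"
  define c :: complex where "c = of_nat d"
  have c: "c \<noteq> 0" "cnj c = c" using assms(1) by (simp_all add: c_def)
  have H: "hermitian_mat (2 * d) H" using assms(3) by (simp add: H_def hermitian_mat_qmat_hat)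
  then have H_carrier: "H \<in> carrier_mat (2 * d) (2 * d)" by (rule hermitian_mat_carrier)
  have quad: "H * H = (- 2) \<cdot>\<^sub>m H + (c * c - 1) \<cdot>\<^sub>m 1\<^sub>m (2 * d)"
    by (rule hermitian_mat_square_eq_of_char_poly[OF H assms(5)[folded c_def H_def] c(2)])
  have tr: "mtrace H = 0" using assms(4) by (simp add: H_def mtrace_qmat_hat)
  have pt: "ptrans2 (cconj_mat H) = - H"
    using assms(4) by (simp add: H_def ptrans2_cconj_mat_qmat_hat qmat_hat_qconj_pure)
  define U where "U = (1 / c) \<cdot>\<^sub>m char_matrix H (- 1)"
  have "mtrace (U * ptrans2 (cconj_mat U)) = of_nat (2 * d) * (2 - c * c) / (c * c)"
    unfolding U_def ptrans2_cconj_mat_shift[OF H_carrier pt c(2)]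
    by (rule mtrace_shift_product_of_quadratic_relation[OF H_carrier quad tr c(1)])
  also have "of_nat (2 * d) = 2 * c" by (simp add: c_def)
  finally have tr_U: "mtrace (U * ptrans2 (cconj_mat U)) = 2 * c * (2 - c * c) / (c * c)" .
  have "mtrace (U * ptrans2 (cconj_mat U)) / (2 * c) = - 1 + 2 / c\<^sup>2"
    unfolding tr_U using c(1) by (simp add: field_simps power2_eq_square)
  moreover have "unitary_mat (2 * d) U"
    unfolding U_def using H quad c by (rule unitary_mat_shift_of_quadratic_relation)
  ultimately show ?thesis unfolding c_def by blast
qed

end
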